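(* In the standing setting below, let $x'\in\mathbb{X}$, $y_0,y_1\in\mathbb{Y}$ with $y_0\ne y_1$, and $f_i(x)=-c(x,y_i)+c(x',y_i)$ for $i=0,1$. Let $S=\{x\in\mathbb{X}: f_0(x)\le f_1(x)\}$. If $f_0(x_0)=f_1(x_0)$ for some $x_0\in\mathbb{X}$, then $x_0\in\partial S$ (boundary in $\mathbb{R}^n$).
   Context: Standing setting: $\mathbb{X},\mathbb{Y}\subset\mathbb{R}^n$ are compact with non-empty interior; $c:\mathbb{X}\times\mathbb{Y}\to\mathbb{R}$ has continuous $D_xc$, $D_yc$, and continuous mixed second derivatives with $D^2_{xy}c=(D^2_{yx}c)^T$; for each $x$ the map $y\mapsto -D_xc(x,y)$ is injective on $\mathbb{Y}$ and for each $y$ the map $x\mapsto -D_yc(x,y)$ is injective on $\mathbb{X}$; $D^2_{xy}c(x,y)$ is invertible everywhere; for every $y$ the set $\{-D_yc(x,y):x\in\mathbb{X}\}$ is convex and for every $x$ the set $\{-D_xc(x,y):y\in\mathbb{Y}\}$ is convex. *)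

theory Defs
  imports "HOL-Analysis.Analysis"
begin

text \<open>Dxc x y is the gradient of c in x, Dyc x y the gradient of c in y;
  Dxyc x y = D_y (D_x c)(x,y) and Dyxc x y = D_x (D_y c)(x,y) are the mixed
  second derivatives (as bounded linear maps).\<close>

definition standing_setting ::
  "'a::euclidean_space set \<Rightarrow> 'a set \<Rightarrow> ('a \<Rightarrow> 'a \<Rightarrow> real)
   \<Rightarrow> ('a \<Rightarrow> 'a \<Rightarrow> 'a) \<Rightarrow> ('a \<Rightarrow> 'a \<Rightarrow> 'a)
   \<Rightarrow> ('a \<Rightarrow> 'a \<Rightarrow> ('a \<Rightarrow>\<^sub>L 'a)) \<Rightarrow> ('a \<Rightarrow> 'a \<Rightarrow> ('a \<Rightarrow>\<^sub>L 'a)) \<Rightarrow> bool" where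
  "standing_setting X Y c Dxc Dyc Dxyc Dyxc \<longleftrightarrow>
     compact X \<and> compact Y \<and> interior X \<noteq> {} \<and> interior Y \<noteq> {} \<and>
     (\<forall>x\<in>X. \<forall>y\<in>Y. ((\<lambda>x'. c x' y) has_derivative (\<lambda>h. Dxc x y \<bullet> h)) (at x within X)) \<and>
     (\<forall>x\<in>X. \<forall>y\<in>Y. ((\<lambda>y'. c x y') has_derivative (\<lambda>h. Dyc x y \<bullet> h)) (at y within Y)) \<and>
     continuous_on (X \<times> Y) (\<lambda>(x,y). Dxc x y) \<and>
     continuous_on (X \<times> Y) (\<lambda>(x,y). Dyc x y) \<and>
     (\<forall>x\<in>X. \<forall>y\<in>Y. ((\<lambda>y'. Dxc x y') has_derivative blinfun_apply (Dxyc x y)) (at y within Y)) \<and>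
     (\<forall>x\<in>X. \<forall>y\<in>Y. ((\<lambda>x'. Dyc x' y) has_derivative blinfun_apply (Dyxc x y)) (at x within X)) \<and>
     continuous_on (X \<times> Y) (\<lambda>(x,y). Dxyc x y) \<and>
     continuous_on (X \<times> Y) (\<lambda>(x,y). Dyxc x y) \<and>
     (\<forall>x\<in>X. \<forall>y\<in>Y. \<forall>u v. (Dxyc x y u) \<bullet> v = u \<bullet> (Dyxc x y v)) \<and>
     (\<forall>x\<in>X. inj_on (\<lambda>y. - Dxc x y) Y) \<and>
     (\<forall>y\<in>Y. inj_on (\<lambda>x. - Dyc x y) X) \<and>
     (\<forall>x\<in>X. \<forall>y\<in>Y. bij (blinfun_apply (Dxyc x y))) \<and>
     (\<forall>y\<in>Y. convex ((\<lambda>x. - Dyc x y) ` X)) \<and>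
     (\<forall>x\<in>X. convex ((\<lambda>y. - Dxc x y) ` Y))"

end

theory Submission
  imports Defs
begin

text \<open>The difference \<open>f\<^sub>0 - f\<^sub>1\<close> is maximal on \<open>S\<close> at \<open>x\<^sub>0\<close>, with value \<open>0\<close>.
  Its gradient there is \<open>D\<^sub>xc(x\<^sub>0,y\<^sub>1) - D\<^sub>xc(x\<^sub>0,y\<^sub>0)\<close>, which is non-zero by the
  twist condition (injectivity of \<open>y \<mapsto> -D\<^sub>xc(x\<^sub>0,y)\<close>). If \<open>x\<^sub>0\<close> were an interior
  point of \<open>S\<close>, Fermat's rule would force this gradient to vanish.\<close>

lemma max_point_with_nonzero_gradient_in_frontier:
  fixes g :: "'a::real_inner \<Rightarrow> real"
  assumes deriv: "(g has_derivative (\<lambda>h. D \<bullet> h)) (at x0 within T)"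
    and "D \<noteq> 0" and "x0 \<in> S" and "S \<subseteq> T"
    and max: "\<And>x. x \<in> S \<Longrightarrow> g x \<le> g x0"
  shows "x0 \<in> frontier S"
proof -
  have "x0 \<notin> interior S"
  proof
    assume interior: "x0 \<in> interior S"
    with \<open>S \<subseteq> T\<close> have "x0 \<in> interior T"
      using interior_mono by blast
    with deriv have "(g has_derivative (\<lambda>h. D \<bullet> h)) (at x0)"
      by (metis at_within_interior)
    moreover have "\<forall>x\<in>interior S. g x \<le> g x0"
      using max interior_subset by blast
    ultimately have "(\<lambda>h. D \<bullet> h) = (\<lambda>h. 0)"
      using differential_zero_maxmin[OF interior open_interior] by blast
    then have "D \<bullet> D = 0"
      by metis
    with \<open>D \<noteq> 0\<close> show False
      by simp
  qed
  with \<open>x0 \<in> S\<close> show ?thesis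
    using closure_subset unfolding frontier_def by blast
qed

lemma has_derivative_cost_difference:
  assumes "standing_setting X Y c Dxc Dyc Dxyc Dyxc"
    and "x \<in> X" and "y0 \<in> Y" and "y1 \<in> Y"
  shows "((\<lambda>x. c x y1 - c x y0) has_derivative (\<lambda>h. (Dxc x y1 - Dxc x y0) \<bullet> h)) (at x within X)"
proof -
  have "((\<lambda>x. c x y1 - c x y0) has_derivative (\<lambda>h. Dxc x y1 \<bullet> h - Dxc x y0 \<bullet> h)) (at x within X)"
    using assms unfolding standing_setting_def by (intro derivative_intros) auto
  then show ?thesis
    by (simp add: inner_diff_left)
qed

lemma standing_setting_Dxc_neq:
  assumes "standing_setting X Y c Dxc Dyc Dxyc Dyxc"
    and "x \<in> X" and "y0 \<in> Y" and "y1 \<in> Y" and "y0 \<noteq> y1"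
  shows "Dxc x y1 - Dxc x y0 \<noteq> 0"
proof -
  have "inj_on (\<lambda>y. - Dxc x y) Y"
    using assms(1,2) unfolding standing_setting_def by blast
  with assms(3-5) have "- Dxc x y1 \<noteq> - Dxc x y0"
    by (metis inj_onD)
  then show ?thesis
    by simp
qed

theorem lemma2p19:
  fixes X Y :: "'a::euclidean_space set" and c :: "'a \<Rightarrow> 'a \<Rightarrow> real"
  assumes "standing_setting X Y c Dxc Dyc Dxyc Dyxc"
    and "x' \<in> X" and "y0 \<in> Y" and "y1 \<in> Y" and "y0 \<noteq> y1"
    and "f0 = (\<lambda>x. - c x y0 + c x' y0)" and "f1 = (\<lambda>x. - c x y1 + c x' y1)"
    and "S = {x\<in>X. f0 x \<le> f1 x}"
    and "x0 \<in> X" and "f0 x0 = f1 x0"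
  shows "x0 \<in> frontier S"
proof (rule max_point_with_nonzero_gradient_in_frontier)
  have "((\<lambda>x. c x y1 - c x y0 + (c x' y0 - c x' y1)) has_derivative
        (\<lambda>h. (Dxc x0 y1 - Dxc x0 y0) \<bullet> h + 0)) (at x0 within X)"
    using has_derivative_cost_difference[OF assms(1,9,3,4)] by (intro derivative_intros)
  moreover have "(\<lambda>x. c x y1 - c x y0 + (c x' y0 - c x' y1)) = (\<lambda>x. f0 x - f1 x)"
    using assms(6,7) by auto
  ultimately show "((\<lambda>x. f0 x - f1 x) has_derivative (\<lambda>h. (Dxc x0 y1 - Dxc x0 y0) \<bullet> h)) (at x0 within X)"
    by simp
  show "Dxc x0 y1 - Dxc x0 y0 \<noteq> 0"
    using standing_setting_Dxc_neq[OF assms(1,9,3-5)] .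
  show "x0 \<in> S" "S \<subseteq> X" "\<And>x. x \<in> S \<Longrightarrow> f0 x - f1 x \<le> f0 x0 - f1 x0"
    using assms(8-10) by auto
qed

end
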